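(* For every composition $I=(i_1,\dots,i_r)$, \[ \mathrm{PT}^A_{(1,i_1,i_2,\dots,i_r)}(q)=\mathrm{PT}^A_I(q), \qquad \mathrm{PT}^A_{(1+i_1,i_2,\dots,i_r)}(q)=[r]_q\,\mathrm{PT}^A_I(q)+\sum_{k=1}^{r-1}q^{k-1}\,\mathrm{PT}^A_{(i_1,\dots,i_{k-1},i_k+i_{k+1},i_{k+2},\dots,i_r)}(q). \]
   Context: $[m]_q=1+q+\dots+q^{m-1}$. Let $k\ge1$ and let $\lambda$ be a Young diagram with exactly $k$ rows (rows of length $0$ allowed) and exactly $n-k$ nonempty columns, drawn in French convention (rows left-justified, longest row at the bottom). Encode $\lambda$ by the composition $I=(i_1,\dots,i_k)$ of $n$ where, for $1\le t\le k$, $i_t-1$ is the number of columns of length $k-t+1$ (a bijection onto compositions of $n$ with $k$ parts). A (type A) permutation tableau of shape $\lambda$ is a filling of the boxes with $0$'s and $1$'s such that (1) every column contains at least one $1$, and (2) no box containing a $0$ has both a $1$ below it in the same column and a $1$ to its left in the same row. Its rank is (number of $1$'s) minus (number of columns). $\mathrm{PT}^A_I(q)=\sum_T q^{\mathrm{rank}(T)}$ over permutation tableaux $T$ of the shape encoded by $I$. *)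

theory Defs
  imports "HOL-Computational_Algebra.Polynomial"
begin

definition is_composition :: "nat list \<Rightarrow> bool" where
  "is_composition I \<longleftrightarrow> I \<noteq> [] \<and> (\<forall>x\<in>set I. 0 < x)"

text \<open>Column lengths of the diagram encoded by I (k = length I), from left to right:
  for t = 1..k (0-based t-1 below), there are i_t - 1 columns of length k - t + 1.
  In French convention the left columns are the longest.\<close>
definition colLens :: "nat list \<Rightarrow> nat list" where
  "colLens I = concat (map (\<lambda>t. replicate (I ! t - 1) (length I - t)) [0..<length I])"

definition ncols :: "nat list \<Rightarrow> nat" where
  "ncols I = length (colLens I)"

text \<open>Boxes as pairs (row, column), 0-based; row 0 is the bottom row, column 0 the leftmost.\<close>
definition boxes :: "nat list \<Rightarrow> (nat \<times> nat) set" where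
  "boxes I = {(r, c). c < ncols I \<and> r < colLens I ! c}"

text \<open>A filling is represented by the set S of boxes containing a 1.\<close>
definition perm_tableau :: "nat list \<Rightarrow> (nat \<times> nat) set \<Rightarrow> bool" where
  "perm_tableau I S \<longleftrightarrow>
     S \<subseteq> boxes I \<and>
     (\<forall>c < ncols I. \<exists>r. (r, c) \<in> S) \<and>
     (\<forall>r c. (r, c) \<in> boxes I \<and> (r, c) \<notin> S \<longrightarrow>
        \<not> ((\<exists>r' < r. (r', c) \<in> S) \<and> (\<exists>c' < c. (r, c') \<in> S)))"

definition tableaux :: "nat list \<Rightarrow> (nat \<times> nat) set set" where
  "tableaux I = {S. perm_tableau I S}"

definition tab_rank :: "nat list \<Rightarrow> (nat \<times> nat) set \<Rightarrow> nat" where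
  "tab_rank I S = card S - ncols I"

definition PT :: "nat list \<Rightarrow> int poly" where
  "PT I = (\<Sum>S\<in>tableaux I. monom 1 (tab_rank I S))"

definition qint :: "nat \<Rightarrow> int poly" where
  "qint m = (\<Sum>j<m. monom 1 j)"

text \<open>Merge parts k and k+1 (1-based k) of I.\<close>
definition merge_at :: "nat list \<Rightarrow> nat \<Rightarrow> nat list" where
  "merge_at I k = take (k - 1) I @ [I ! (k - 1) + I ! k] @ drop (k + 1) I"

end

theory Submission
  imports Defs
begin

text \<open>
  Encode a diagram by its list of column lengths, longest first, and refine the generating
  function of permutation tableaux by a second variable x counting the free rows: rows
  containing no 0 with a 1 below it. When a new leftmost column of maximal height is prepended,
  its 1s may form any nonempty set R of free rows, and afterwards a free row stays free iff it
  lies in R or below all of R. Summing over R, prepending a column acts linearly on polynomials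
  in x, sending x^a to phi(a) with phi(a+1) = (1 + q x) phi(a) + x^(a+1). Hence the refined
  generating function of the shape encoded by (i1, ..., ir) is
  G(i1, ..., ir) = Phi^(i1 - 1) (x G(i2, ..., ir)), and PT is its value at x = 1.
  A leading part 1 adds no column, which is the first identity; the second is
  Phi(G I) = [r]_q G I + sum_k q^(k-1) G(merge_k I), proved by induction on I from
  Phi(x p) = (1 + q x) Phi(p) + x p.
\<close>

text \<open>Refined generating functions live in \<open>\<int>[q][x]\<close>: \<open>x\<close> is the outer variable.\<close>

definition x_var :: "int poly poly" where
  "x_var = monom 1 1"

definition q_var :: "int poly" where
  "q_var = monom 1 1"

lemma x_var_power: "x_var ^ n = monom 1 n"
  by (simp add: x_var_def monom_power)

lemma q_var_mult_monom: "q_var * monom 1 k = monom 1 (Suc k)"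
  by (simp add: q_var_def mult_monom)

lemma smult_sum_right: "smult c (sum f A) = (\<Sum>a\<in>A. smult c (f a))"
  by (induction A rule: infinite_finite_induct) (auto simp: smult_add_right)

lemma qint_Suc: "qint (Suc r) = 1 + q_var * qint r"
proof -
  have "qint (Suc r) = monom 1 0 + (\<Sum>j<r. monom 1 (Suc j))"
    unfolding qint_def by (subst sum.lessThan_Suc_shift) simp
  also have "(\<Sum>j<r. monom 1 (Suc j)) = q_var * qint r"
    by (simp add: qint_def sum_distrib_left q_var_mult_monom)
  finally show ?thesis
    by (simp add: one_pCons)
qed

lemma sum_Pow_power_card:
  fixes y :: "'a :: comm_semiring_1"
  assumes "finite B"
  shows "(\<Sum>S\<in>Pow B. y ^ card S) = (1 + y) ^ card B"
proof -
  have "(1 + y) ^ card B = (\<Prod>b\<in>B. y + 1)"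
    by (simp add: add.commute)
  also have "\<dots> = (\<Sum>S\<in>Pow B. y ^ card S)"
    using assms prod_add[of B "\<lambda>_. y" "\<lambda>_. 1"] by simp
  finally show ?thesis ..
qed

section \<open>The column operator\<close>

text \<open>\<open>add_col_monom a\<close> is the sum evaluated in \<open>sum_column_weight\<close>.\<close>

fun add_col_monom :: "nat \<Rightarrow> int poly poly" where
  "add_col_monom 0 = 0"
| "add_col_monom (Suc a) = (1 + smult q_var x_var) * add_col_monom a + x_var ^ Suc a"

definition add_col :: "int poly poly \<Rightarrow> int poly poly" where
  "add_col p = (\<Sum>a\<le>degree p. smult (coeff p a) (add_col_monom a))"

lemma add_col_monom_Suc':
  "add_col_monom (Suc a) = x_var * (1 + smult q_var x_var) ^ a + x_var * add_col_monom a"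
proof (induction a)
  case (Suc a)
  have "add_col_monom (Suc (Suc a))
      = (1 + smult q_var x_var) * (x_var * (1 + smult q_var x_var) ^ a + x_var * add_col_monom a)
        + x_var * x_var ^ Suc a"
    by (simp only: add_col_monom.simps(2)[of "Suc a"] Suc power_Suc)
  also have "\<dots> = x_var * (1 + smult q_var x_var) ^ Suc a
      + x_var * ((1 + smult q_var x_var) * add_col_monom a + x_var ^ Suc a)"
    by (simp add: algebra_simps)
  finally show ?case
    by simp
qed simp

lemma add_col_eq_sum_lessThan:
  assumes "degree p < n"
  shows "add_col p = (\<Sum>a<n. smult (coeff p a) (add_col_monom a))"
  unfolding add_col_def using assms
  by (intro sum.mono_neutral_left) (auto simp: coeff_eq_0)

lemma add_col_add: "add_col (p + q) = add_col p + add_col q"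
proof -
  let ?n = "Suc (max (degree p) (degree q))"
  have "degree (p + q) < ?n"
    using degree_add_le_max[of p q] by linarith
  then show ?thesis
    by (simp add: add_col_eq_sum_lessThan[of _ ?n] smult_add_left sum.distrib)
qed

lemma add_col_smult: "add_col (smult c p) = smult c (add_col p)"
proof -
  have "degree (smult c p) < Suc (degree p)"
    using degree_smult_le[of c p] by linarith
  then show ?thesis
    by (simp add: add_col_eq_sum_lessThan[of _ "Suc (degree p)"] smult_sum_right smult_smult
        del: sum.lessThan_Suc)
qed

lemma add_col_0 [simp]: "add_col 0 = 0"
  by (simp add: add_col_def)

lemma add_col_sum: "add_col (sum f A) = (\<Sum>a\<in>A. add_col (f a))"
  by (induction A rule: infinite_finite_induct) (auto simp: add_col_add)

lemma add_col_x_power: "add_col (x_var ^ a) = add_col_monom a"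
  by (simp add: add_col_eq_sum_lessThan[of _ "Suc a"] x_var_power degree_monom_eq coeff_monom
      if_distrib[of "\<lambda>c. smult c _"] cong: if_cong del: sum.lessThan_Suc)

lemma add_col_1 [simp]: "add_col 1 = 0"
  using add_col_x_power[of 0] by simp

lemma add_col_x_mult: "add_col (x_var * p) = (1 + smult q_var x_var) * add_col p + x_var * p"
proof -
  let ?n = "Suc (degree p)"
  have xp: "x_var * p = pCons 0 p"
    by (simp add: x_var_def monom_Suc)
  have "degree (x_var * p) < Suc ?n"
    unfolding xp using degree_pCons_le[of 0 p] by linarith
  then have "add_col (x_var * p) = (\<Sum>a<?n. smult (coeff p a) (add_col_monom (Suc a)))"
    by (simp add: add_col_eq_sum_lessThan[of _ "Suc ?n"] xp sum.lessThan_Suc_shift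
        del: sum.lessThan_Suc)
  also have "\<dots> = (1 + smult q_var x_var) * (\<Sum>a<?n. smult (coeff p a) (add_col_monom a))
      + x_var * (\<Sum>a<?n. smult (coeff p a) (x_var ^ a))"
    by (simp add: smult_add_right sum.distrib sum_distrib_left del: sum.lessThan_Suc)
  also have "(\<Sum>a<?n. smult (coeff p a) (x_var ^ a)) = p"
    by (subst (2) poly_as_sum_of_monoms[symmetric])
      (simp add: x_var_power smult_monom lessThan_Suc_atMost)
  finally show ?thesis
    by (simp add: add_col_eq_sum_lessThan[of _ ?n])
qed

lemma funpow_add_col_add: "(add_col ^^ m) (p + q) = (add_col ^^ m) p + (add_col ^^ m) q"
  by (induction m) (auto simp: add_col_add)

lemma funpow_add_col_smult: "(add_col ^^ m) (smult c p) = smult c ((add_col ^^ m) p)"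
  by (induction m) (auto simp: add_col_smult)

lemma funpow_add_col_0 [simp]: "(add_col ^^ m) 0 = 0"
  by (induction m) auto

lemma funpow_add_col_sum: "(add_col ^^ m) (sum f A) = (\<Sum>a\<in>A. (add_col ^^ m) (f a))"
  by (induction A rule: infinite_finite_induct) (auto simp: funpow_add_col_add)

section \<open>The recurrence for the refined generating function\<close>

fun comp_gf :: "nat list \<Rightarrow> int poly poly" where
  "comp_gf [] = 1"
| "comp_gf (i # J) = (add_col ^^ (i - 1)) (x_var * comp_gf J)"

lemma merge_at_Cons: "1 \<le> k \<Longrightarrow> merge_at (i # J) (Suc k) = i # merge_at J k"
  by (cases k) (auto simp: merge_at_def)

lemma sum_monom_shift:
  "(\<Sum>k\<in>{1..<Suc (Suc n)}. smult (monom 1 (k - 1)) (f k :: int poly poly))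
     = f 1 + smult q_var (\<Sum>k\<in>{1..<Suc n}. smult (monom 1 (k - 1)) (f (Suc k)))"
proof -
  have "(\<Sum>k\<in>{1..<Suc (Suc n)}. smult (monom 1 (k - 1)) (f k))
      = f 1 + (\<Sum>k\<in>{1..<Suc n}. smult (monom 1 k) (f (Suc k)))"
    by (simp add: sum.atLeast_Suc_lessThan sum.shift_bounds_Suc_ivl del: sum.op_ivl_Suc)
  also have "(\<Sum>k\<in>{1..<Suc n}. smult (monom 1 k) (f (Suc k)))
      = smult q_var (\<Sum>k\<in>{1..<Suc n}. smult (monom 1 (k - 1)) (f (Suc k)))"
    unfolding smult_sum_right
    by (rule sum.cong) (auto simp: smult_smult q_var_mult_monom)
  finally show ?thesis .
qed

lemma add_col_comp_gf:
  assumes "\<forall>x\<in>set I. 0 < x"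
  shows "add_col (comp_gf I) = smult (qint (length I)) (comp_gf I)
      + (\<Sum>k\<in>{1..<length I}. smult (monom 1 (k - 1)) (comp_gf (merge_at I k)))"
  using assms
proof (induction I)
  case Nil
  then show ?case by (simp add: qint_def)
next
  case (Cons i J)
  let ?n = "length J" and ?F = "add_col ^^ (i - 1)"
  have IH: "add_col (comp_gf J) = smult (qint ?n) (comp_gf J)
      + (\<Sum>k\<in>{1..<?n}. smult (monom 1 (k - 1)) (comp_gf (merge_at J k)))"
    using Cons by simp
  have expand: "add_col (comp_gf (i # J)) = ?F (add_col (comp_gf J))
      + smult q_var (?F (x_var * add_col (comp_gf J))) + comp_gf (i # J)"
    by (simp add: funpow_swap1 add_col_x_mult funpow_add_col_add funpow_add_col_smult distrib_right)
  have shifted: "?F (x_var * add_col (comp_gf J)) = smult (qint ?n) (comp_gf (i # J))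
      + (\<Sum>k\<in>{1..<?n}. smult (monom 1 (k - 1)) (comp_gf (merge_at (i # J) (Suc k))))"
    unfolding IH
    by (simp add: distrib_left sum_distrib_left funpow_add_col_add funpow_add_col_smult
        funpow_add_col_sum merge_at_Cons)
  show ?case
  proof (cases J)
    case Nil
    then show ?thesis using expand by (simp add: qint_def)
  next
    case (Cons j J')
    have "i \<ge> 1" "j \<ge> 1"
      using \<open>\<forall>x\<in>set (i # J). 0 < x\<close> \<open>J = j # J'\<close> by auto
    have "?F (add_col (comp_gf J)) = (add_col ^^ (i - 1 + 1 + (j - 1))) (x_var * comp_gf J')"
      using \<open>J = j # J'\<close> by (simp add: funpow_add funpow_swap1)
    also have "i - 1 + 1 + (j - 1) = i + j - 1"
      using \<open>i \<ge> 1\<close> \<open>j \<ge> 1\<close> by simp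
    finally have merged: "?F (add_col (comp_gf J)) = comp_gf (merge_at (i # J) 1)"
      using \<open>J = j # J'\<close> by (simp add: merge_at_def)
    have "add_col (comp_gf (i # J)) = smult (1 + q_var * qint ?n) (comp_gf (i # J))
        + (comp_gf (merge_at (i # J) 1) + smult q_var
            (\<Sum>k\<in>{1..<?n}. smult (monom 1 (k - 1)) (comp_gf (merge_at (i # J) (Suc k)))))"
      unfolding expand shifted merged
      by (simp add: smult_add_left smult_add_right smult_smult algebra_simps del: comp_gf.simps)
    then show ?thesis
      using sum_monom_shift[where n = "length J'" and f = "\<lambda>k. comp_gf (merge_at (i # J) k)"]
      by (simp add: \<open>J = j # J'\<close> qint_Suc del: comp_gf.simps)
  qed
qed

section \<open>Permutation tableaux by column lengths\<close>

definition diagram :: "nat list \<Rightarrow> (nat \<times> nat) set" where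
  "diagram cl = {(r, c). c < length cl \<and> r < cl ! c}"

definition no_forbidden_zero :: "nat list \<Rightarrow> (nat \<times> nat) set \<Rightarrow> bool" where
  "no_forbidden_zero cl S \<longleftrightarrow>
     (\<forall>r c. (r, c) \<in> diagram cl \<and> (r, c) \<notin> S \<longrightarrow>
        \<not> ((\<exists>r' < r. (r', c) \<in> S) \<and> (\<exists>c' < c. (r, c') \<in> S)))"

definition ptableau :: "nat list \<Rightarrow> (nat \<times> nat) set \<Rightarrow> bool" where
  "ptableau cl S \<longleftrightarrow> S \<subseteq> diagram cl \<and> (\<forall>c < length cl. \<exists>r. (r, c) \<in> S) \<and> no_forbidden_zero cl S"

text \<open>A 1 in row \<open>r\<close> of a new leftmost column is allowed iff \<open>r\<close> is not blocked.\<close>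

definition blocked_row :: "nat list \<Rightarrow> (nat \<times> nat) set \<Rightarrow> nat \<Rightarrow> bool" where
  "blocked_row cl S r \<longleftrightarrow> (\<exists>c. (r, c) \<in> diagram cl \<and> (r, c) \<notin> S \<and> (\<exists>r' < r. (r', c) \<in> S))"

definition free_rows :: "nat list \<Rightarrow> (nat \<times> nat) set \<Rightarrow> nat \<Rightarrow> nat set" where
  "free_rows cl S N = {r. r < N \<and> \<not> blocked_row cl S r}"

text \<open>Free rows are counted up to the height \<open>N\<close> of the next column to be prepended.\<close>

definition tableau_weight :: "nat \<Rightarrow> nat list \<Rightarrow> (nat \<times> nat) set \<Rightarrow> int poly poly" where
  "tableau_weight N cl S = smult (q_var ^ (card S - length cl)) (x_var ^ card (free_rows cl S N))"

definition tableau_gf :: "nat \<Rightarrow> nat list \<Rightarrow> int poly poly" where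
  "tableau_gf N cl = (\<Sum>S | ptableau cl S. tableau_weight N cl S)"

lemma free_rows_subset: "free_rows cl S N \<subseteq> {..<N}"
  by (auto simp: free_rows_def)

lemma finite_free_rows: "finite (free_rows cl S N)"
  using free_rows_subset by (rule finite_subset) simp

lemma finite_diagram: "finite (diagram cl)"
proof -
  have "diagram cl \<subseteq> {..<sum_list cl} \<times> {..<length cl}"
    by (auto simp: diagram_def intro: less_le_trans[OF _ elem_le_sum_list])
  then show ?thesis
    by (rule finite_subset) auto
qed

lemma finite_ptableaux: "finite {S. ptableau cl S}"
proof (rule finite_subset)
  show "{S. ptableau cl S} \<subseteq> Pow (diagram cl)"
    by (auto simp: ptableau_def)
qed (simp add: finite_diagram)

lemma ptableau_finite: "ptableau cl S \<Longrightarrow> finite S"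
  using finite_diagram unfolding ptableau_def by (meson finite_subset)

lemma ptableau_length_le_card:
  assumes "ptableau cl S"
  shows "length cl \<le> card S"
proof -
  have "{..<length cl} \<subseteq> snd ` S"
    using assms unfolding ptableau_def by force
  then have "card {..<length cl} \<le> card (snd ` S)"
    using ptableau_finite[OF assms] by (intro card_mono) auto
  also have "\<dots> \<le> card S"
    using ptableau_finite[OF assms] by (rule card_image_le)
  finally show ?thesis
    by simp
qed

section \<open>Prepending a column\<close>

definition prepend_column :: "nat set \<Rightarrow> (nat \<times> nat) set \<Rightarrow> (nat \<times> nat) set" where
  "prepend_column R T = (\<lambda>r. (r, 0)) ` R \<union> (\<lambda>(r, c). (r, Suc c)) ` T"

definition still_free :: "nat set \<Rightarrow> nat set \<Rightarrow> nat set" where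
  "still_free A R = {a \<in> A. a \<in> R \<or> (\<forall>r\<in>R. a \<le> r)}"

definition column_weight :: "nat set \<Rightarrow> nat set \<Rightarrow> int poly poly" where
  "column_weight A R = smult (q_var ^ (card R - 1)) (x_var ^ card (still_free A R))"

lemma still_free_insert_min:
  assumes "\<forall>b\<in>B. m < b" "S \<subseteq> B"
  shows "still_free (insert m B) (insert m S) = insert m S"
  using assms by (auto simp: still_free_def)

lemma still_free_insert_below:
  assumes "\<forall>b\<in>B. m < b" "R \<subseteq> B"
  shows "still_free (insert m B) R = insert m (still_free B R)"
  using assms by (force simp: still_free_def)

lemma nonempty_subsets_insert:
  "{R. R \<noteq> {} \<and> R \<subseteq> insert m B} = insert m ` Pow B \<union> {R. R \<noteq> {} \<and> R \<subseteq> B}"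
proof (intro equalityI subsetI)
  fix R
  assume "R \<in> {R. R \<noteq> {} \<and> R \<subseteq> insert m B}"
  then show "R \<in> insert m ` Pow B \<union> {R. R \<noteq> {} \<and> R \<subseteq> B}"
    by (cases "m \<in> R") (auto intro!: image_eqI[of _ _ "R - {m}"])
qed auto

lemma sum_column_weight_insert_min:
  assumes "finite B" "\<forall>b\<in>B. m < b"
  shows "(\<Sum>R\<in>insert m ` Pow B. column_weight (insert m B) R) = x_var * (1 + smult q_var x_var) ^ card B"
proof -
  have "m \<notin> B"
    using assms(2) by blast
  then have inj: "inj_on (insert m) (Pow B)"
    by (intro inj_onI) (metis PowD insert_ident subsetD)
  have "(\<Sum>R\<in>insert m ` Pow B. column_weight (insert m B) R)
      = (\<Sum>S\<in>Pow B. x_var * (smult q_var x_var) ^ card S)"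
  proof (subst sum.reindex[OF inj], intro sum.cong refl)
    fix S
    assume "S \<in> Pow B"
    then have "finite S" "m \<notin> S" "S \<subseteq> B"
      using assms \<open>m \<notin> B\<close> by (auto intro: finite_subset)
    then show "(column_weight (insert m B) \<circ> insert m) S = x_var * (smult q_var x_var) ^ card S"
      using assms(2) by (simp add: column_weight_def still_free_insert_min smult_power)
  qed
  also have "\<dots> = x_var * (1 + smult q_var x_var) ^ card B"
    using assms(1) by (simp add: sum_Pow_power_card flip: sum_distrib_left)
  finally show ?thesis .
qed

lemma column_weight_insert_below:
  assumes "finite B" "\<forall>b\<in>B. m < b" "R \<subseteq> B"
  shows "column_weight (insert m B) R = x_var * column_weight B R"
proof -
  have "m \<notin> still_free B R" "finite (still_free B R)"
    using assms by (auto simp: still_free_def)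
  then show ?thesis
    using assms by (simp add: column_weight_def still_free_insert_below)
qed

lemma sum_column_weight:
  assumes "finite A"
  shows "(\<Sum>R | R \<noteq> {} \<and> R \<subseteq> A. column_weight A R) = add_col_monom (card A)"
  using assms
proof (induction A rule: finite_linorder_min_induct)
  case (insert m B)
  then have "m \<notin> B"
    by blast
  have "(\<Sum>R | R \<noteq> {} \<and> R \<subseteq> insert m B. column_weight (insert m B) R)
      = (\<Sum>R\<in>insert m ` Pow B. column_weight (insert m B) R)
        + (\<Sum>R | R \<noteq> {} \<and> R \<subseteq> B. column_weight (insert m B) R)"
    unfolding nonempty_subsets_insert using insert.hyps \<open>m \<notin> B\<close>
    by (intro sum.union_disjoint) auto
  also have "\<dots> = x_var * (1 + smult q_var x_var) ^ card B
      + x_var * (\<Sum>R | R \<noteq> {} \<and> R \<subseteq> B. column_weight B R)"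
    using insert.hyps
    by (simp add: sum_column_weight_insert_min column_weight_insert_below sum_distrib_left)
  finally show ?case
    using insert \<open>m \<notin> B\<close> by (simp add: add_col_monom_Suc' del: add_col_monom.simps)
qed simp

lemma prepend_column_mem_0 [simp]: "(r, 0) \<in> prepend_column R T \<longleftrightarrow> r \<in> R"
  by (auto simp: prepend_column_def)

lemma prepend_column_mem_Suc [simp]: "(r, Suc c) \<in> prepend_column R T \<longleftrightarrow> (r, c) \<in> T"
  by (auto simp: prepend_column_def)

lemma diagram_Cons_0 [simp]: "(r, 0) \<in> diagram (L # cl) \<longleftrightarrow> r < L"
  by (simp add: diagram_def)

lemma diagram_Cons_Suc [simp]: "(r, Suc c) \<in> diagram (L # cl) \<longleftrightarrow> (r, c) \<in> diagram cl"
  by (simp add: diagram_def)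

lemma ex_nat_0_or_Suc: "(\<exists>c::nat. P c) \<longleftrightarrow> P 0 \<or> (\<exists>c. P (Suc c))"
  by (metis not0_implies_Suc)

lemma all_less_Suc_0_and_Suc: "(\<forall>c < Suc n. P c) \<longleftrightarrow> P 0 \<and> (\<forall>c < n. P (Suc c))"
  by (auto simp: less_Suc_eq_0_disj)

lemma prepend_column_subset_diagram:
  "prepend_column R T \<subseteq> diagram (L # cl) \<longleftrightarrow> (\<forall>r\<in>R. r < L) \<and> T \<subseteq> diagram cl"
  by (auto simp: prepend_column_def)

lemma blocked_row_prepend_column:
  "blocked_row (L # cl) (prepend_column R T) a \<longleftrightarrow>
     blocked_row cl T a \<or> (a < L \<and> a \<notin> R \<and> (\<exists>r < a. r \<in> R))"
  unfolding blocked_row_def by (subst ex_nat_0_or_Suc) auto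

lemma no_forbidden_zero_prepend_columnI:
  assumes T: "no_forbidden_zero cl T" and R: "\<forall>r\<in>R. \<not> blocked_row cl T r"
  shows "no_forbidden_zero (L # cl) (prepend_column R T)"
  unfolding no_forbidden_zero_def
proof (intro allI impI notI)
  fix r c
  assume zero: "(r, c) \<in> diagram (L # cl) \<and> (r, c) \<notin> prepend_column R T"
    and "(\<exists>r' < r. (r', c) \<in> prepend_column R T) \<and> (\<exists>c' < c. (r, c') \<in> prepend_column R T)"
  then obtain r' c' where r': "r' < r" "(r', c) \<in> prepend_column R T"
    and c': "c' < c" "(r, c') \<in> prepend_column R T"
    by blast
  then obtain c0 where c0: "c = Suc c0"
    using not0_implies_Suc by force
  have zero': "(r, c0) \<in> diagram cl" "(r, c0) \<notin> T" "(r', c0) \<in> T"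
    using zero r' c0 by auto
  show False
  proof (cases c')
    case 0
    then have "r \<in> R"
      using c' by simp
    moreover have "blocked_row cl T r"
      unfolding blocked_row_def using zero' r' by blast
    ultimately show False
      using R by blast
  next
    case (Suc c1)
    then have "(r, c1) \<in> T" "c1 < c0"
      using c' c0 by auto
    then show False
      using T zero' r' unfolding no_forbidden_zero_def by blast
  qed
qed

lemma no_forbidden_zero_prepend_column:
  "no_forbidden_zero (L # cl) (prepend_column R T) \<longleftrightarrow>
     no_forbidden_zero cl T \<and> (\<forall>r\<in>R. \<not> blocked_row cl T r)"
proof (intro iffI conjI)
  assume prep: "no_forbidden_zero (L # cl) (prepend_column R T)"
  show "no_forbidden_zero cl T"
    unfolding no_forbidden_zero_def
  proof (intro allI impI notI)
    fix r c
    assume "(r, c) \<in> diagram cl \<and> (r, c) \<notin> T"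
      and "(\<exists>r' < r. (r', c) \<in> T) \<and> (\<exists>c' < c. (r, c') \<in> T)"
    then show False
      using prep unfolding no_forbidden_zero_def
      by (metis Suc_mono diagram_Cons_Suc prepend_column_mem_Suc)
  qed
  show "\<forall>r\<in>R. \<not> blocked_row cl T r"
  proof (intro ballI notI)
    fix r
    assume "r \<in> R" "blocked_row cl T r"
    then show False
      using prep unfolding no_forbidden_zero_def blocked_row_def
      by (metis zero_less_Suc diagram_Cons_Suc prepend_column_mem_Suc prepend_column_mem_0)
  qed
qed (simp add: no_forbidden_zero_prepend_columnI)

lemma ptableau_prepend_column:
  "ptableau (L # cl) (prepend_column R T) \<longleftrightarrow> ptableau cl T \<and> R \<noteq> {} \<and> R \<subseteq> free_rows cl T L"
proof -
  have "(\<forall>c < length (L # cl). \<exists>r. (r, c) \<in> prepend_column R T)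
      \<longleftrightarrow> R \<noteq> {} \<and> (\<forall>c < length cl. \<exists>r. (r, c) \<in> T)"
    by (simp only: length_Cons all_less_Suc_0_and_Suc prepend_column_mem_0 prepend_column_mem_Suc) auto
  then show ?thesis
    unfolding ptableau_def prepend_column_subset_diagram no_forbidden_zero_prepend_column free_rows_def
    by blast
qed

lemma prepend_column_split: "S = prepend_column {r. (r, 0) \<in> S} {(r, c). (r, Suc c) \<in> S}"
proof (rule set_eqI)
  fix x :: "nat \<times> nat"
  show "x \<in> S \<longleftrightarrow> x \<in> prepend_column {r. (r, 0) \<in> S} {(r, c). (r, Suc c) \<in> S}"
    by (cases x; cases "snd x") auto
qed

lemma prepend_column_inject:
  "prepend_column R T = prepend_column R' T' \<longleftrightarrow> R = R' \<and> T = T'"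
proof
  assume eq: "prepend_column R T = prepend_column R' T'"
  show "R = R' \<and> T = T'"
  proof
    show "R = R'"
      using eq by (metis prepend_column_mem_0 set_eqI)
    show "T = T'"
      using eq by (metis prepend_column_mem_Suc pred_equals_eq2)
  qed
qed simp

lemma card_prepend_column:
  assumes "finite R" "finite T"
  shows "card (prepend_column R T) = card R + card T"
proof -
  have "inj_on (\<lambda>r. (r, 0::nat)) R" "inj_on (\<lambda>(r, c). (r, Suc c)) T"
    by (auto simp: inj_on_def)
  then show ?thesis
    unfolding prepend_column_def using assms
    by (subst card_Un_disjoint) (auto simp: card_image)
qed

lemma free_rows_prepend_column:
  assumes "L \<le> N" "\<forall>c\<in>set cl. c \<le> L"
  shows "free_rows (L # cl) (prepend_column R T) N = still_free (free_rows cl T L) R \<union> {L..<N}"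
proof -
  have "\<not> blocked_row cl T a" if "L \<le> a" for a
    using assms(2) that unfolding blocked_row_def diagram_def by (auto dest!: nth_mem)
  then show ?thesis
    unfolding free_rows_def still_free_def blocked_row_prepend_column using assms(1)
    by (auto simp: not_less)
qed

lemma bij_betw_prepend_column:
  "bij_betw (\<lambda>(T, R). prepend_column R T)
     (SIGMA T:{T. ptableau cl T}. {R. R \<noteq> {} \<and> R \<subseteq> free_rows cl T L})
     {S. ptableau (L # cl) S}"
proof (rule bij_betwI')
  fix S
  assume "S \<in> {S. ptableau (L # cl) S}"
  moreover define R T where "R = {r. (r, 0) \<in> S}" and "T = {(r, c). (r, Suc c) \<in> S}"
  ultimately have "S = prepend_column R T" "ptableau (L # cl) (prepend_column R T)"
    using prepend_column_split[of S] by auto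
  then show "\<exists>x \<in> (SIGMA T:{T. ptableau cl T}. {R. R \<noteq> {} \<and> R \<subseteq> free_rows cl T L}).
      S = (case x of (T, R) \<Rightarrow> prepend_column R T)"
    by (intro bexI[of _ "(T, R)"]) (auto simp: ptableau_prepend_column)
qed (auto simp: prepend_column_inject ptableau_prepend_column)

lemma tableau_weight_prepend_column:
  assumes "L \<le> N" "\<forall>c\<in>set cl. c \<le> L" "ptableau cl T" "R \<noteq> {}" "R \<subseteq> free_rows cl T L"
  shows "tableau_weight N (L # cl) (prepend_column R T)
    = smult (q_var ^ (card T - length cl)) (x_var ^ (N - L) * column_weight (free_rows cl T L) R)"
proof -
  have "finite R" "finite (still_free (free_rows cl T L) R)"
    using assms(5) finite_free_rows by (auto simp: still_free_def intro: finite_subset)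
  moreover have "card R \<ge> 1"
    using \<open>finite R\<close> assms(4) by (simp add: Suc_leI card_gt_0_iff)
  moreover have "length cl \<le> card T" "finite T"
    using assms(3) by (auto simp: ptableau_length_le_card ptableau_finite)
  ultimately have "card (prepend_column R T) - length (L # cl) = (card T - length cl) + (card R - 1)"
    by (simp add: card_prepend_column)
  moreover have "card (still_free (free_rows cl T L) R \<union> {L..<N})
      = (N - L) + card (still_free (free_rows cl T L) R)"
    using free_rows_subset[of cl T L] \<open>finite (still_free (free_rows cl T L) R)\<close>
    by (subst card_Un_disjoint) (auto simp: still_free_def)
  ultimately show ?thesis
    unfolding tableau_weight_def column_weight_def free_rows_prepend_column[OF assms(1,2)]
    by (simp add: power_add smult_smult mult.commute)
qed

lemma sum_tableau_weight_prepend_column: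
  assumes "L \<le> N" "\<forall>c\<in>set cl. c \<le> L" "ptableau cl T"
  shows "(\<Sum>R | R \<noteq> {} \<and> R \<subseteq> free_rows cl T L. tableau_weight N (L # cl) (prepend_column R T))
    = smult (q_var ^ (card T - length cl)) (x_var ^ (N - L) * add_col_monom (card (free_rows cl T L)))"
proof -
  have "(\<Sum>R | R \<noteq> {} \<and> R \<subseteq> free_rows cl T L. tableau_weight N (L # cl) (prepend_column R T))
      = (\<Sum>R | R \<noteq> {} \<and> R \<subseteq> free_rows cl T L.
          smult (q_var ^ (card T - length cl)) (x_var ^ (N - L) * column_weight (free_rows cl T L) R))"
    using assms by (intro sum.cong) (simp_all add: tableau_weight_prepend_column)
  also have "\<dots> = smult (q_var ^ (card T - length cl))
      (x_var ^ (N - L) * (\<Sum>R | R \<noteq> {} \<and> R \<subseteq> free_rows cl T L. column_weight (free_rows cl T L) R))"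
    by (simp add: smult_sum_right sum_distrib_left)
  finally show ?thesis
    by (simp only: sum_column_weight finite_free_rows)
qed

lemma tableau_gf_Cons:
  assumes "L \<le> N" "\<forall>c\<in>set cl. c \<le> L"
  shows "tableau_gf N (L # cl) = x_var ^ (N - L) * add_col (tableau_gf L cl)"
proof -
  have "finite {R. R \<noteq> {} \<and> R \<subseteq> free_rows cl T L}" for T
    using finite_free_rows by simp
  then have "tableau_gf N (L # cl) = (\<Sum>T | ptableau cl T.
      \<Sum>R | R \<noteq> {} \<and> R \<subseteq> free_rows cl T L. tableau_weight N (L # cl) (prepend_column R T))"
    unfolding tableau_gf_def sum.reindex_bij_betw[OF bij_betw_prepend_column, symmetric]
    using finite_ptableaux by (subst sum.Sigma) (auto simp: case_prod_unfold)
  also have "\<dots> = (\<Sum>T | ptableau cl T. smult (q_var ^ (card T - length cl))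
      (x_var ^ (N - L) * add_col_monom (card (free_rows cl T L))))"
    using assms by (intro sum.cong) (simp_all add: sum_tableau_weight_prepend_column)
  also have "\<dots> = x_var ^ (N - L) * add_col (tableau_gf L cl)"
    by (simp add: tableau_gf_def tableau_weight_def add_col_sum add_col_smult add_col_x_power
        sum_distrib_left)
  finally show ?thesis .
qed

lemma tableau_gf_Nil: "tableau_gf N [] = x_var ^ N"
proof -
  have "{S. ptableau [] S} = {{}}" "free_rows [] {} N = {..<N}"
    by (auto simp: ptableau_def no_forbidden_zero_def free_rows_def blocked_row_def diagram_def)
  then show ?thesis
    by (simp add: tableau_gf_def tableau_weight_def)
qed

lemma tableau_gf_lift:
  assumes "sorted_wrt (\<ge>) cl" "\<forall>c\<in>set cl. c \<le> L" "L \<le> N"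
  shows "tableau_gf N cl = x_var ^ (N - L) * tableau_gf L cl"
proof (cases cl)
  case Nil
  then show ?thesis
    using assms by (simp add: tableau_gf_Nil flip: power_add)
next
  case (Cons L' cl')
  then have "L' \<le> L" "\<forall>c\<in>set cl'. c \<le> L'"
    using assms by auto
  then show ?thesis
    using Cons assms by (simp add: tableau_gf_Cons mult.assoc flip: power_add)
qed

lemma tableau_gf_replicate:
  assumes "\<forall>c\<in>set cl. c \<le> N"
  shows "tableau_gf N (replicate m N @ cl) = (add_col ^^ m) (tableau_gf N cl)"
proof (induction m)
  case (Suc m)
  have "tableau_gf N (N # replicate m N @ cl) = add_col (tableau_gf N (replicate m N @ cl))"
    using assms by (subst tableau_gf_Cons) auto
  then show ?case
    using Suc by simp
qed simp

lemma colLens_Nil: "colLens [] = []"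
  by (simp add: colLens_def)

lemma colLens_Cons: "colLens (i # J) = replicate (i - 1) (Suc (length J)) @ colLens J"
  by (simp add: colLens_def upt_conv_Cons map_Suc_upt[symmetric] o_def del: upt_Suc)

lemma colLens_le_length: "\<forall>c\<in>set (colLens I). c \<le> length I"
  by (auto simp: colLens_def)

lemma sorted_colLens: "sorted_wrt (\<ge>) (colLens I)"
proof (induction I)
  case (Cons i J)
  have "sorted_wrt (\<ge>) (replicate n (Suc (length J)))" for n
    by (induction n) auto
  then show ?case
    using Cons colLens_le_length[of J] by (auto simp: colLens_Cons sorted_wrt_append)
qed (simp add: colLens_Nil)

lemma tableau_gf_colLens: "\<forall>x\<in>set I. 0 < x \<Longrightarrow> tableau_gf (length I) (colLens I) = comp_gf I"
proof (induction I)
  case (Cons i J)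
  have le: "\<forall>c\<in>set (colLens J). c \<le> length J"
    by (rule colLens_le_length)
  have "tableau_gf (length (i # J)) (colLens (i # J))
      = (add_col ^^ (i - 1)) (tableau_gf (Suc (length J)) (colLens J))"
    unfolding colLens_Cons length_Cons using le by (intro tableau_gf_replicate) auto
  also have "tableau_gf (Suc (length J)) (colLens J) = x_var * tableau_gf (length J) (colLens J)"
    using le sorted_colLens by (subst tableau_gf_lift) auto
  finally show ?case
    using Cons by simp
qed (simp add: colLens_Nil tableau_gf_Nil)

lemma PT_eq_ptableau_sum: "PT I = (\<Sum>S | ptableau (colLens I) S. monom 1 (card S - length (colLens I)))"
proof -
  have "perm_tableau I S \<longleftrightarrow> ptableau (colLens I) S" for S
    by (simp add: perm_tableau_def ptableau_def no_forbidden_zero_def boxes_def diagram_def ncols_def)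
  then show ?thesis
    by (simp add: PT_def tableaux_def tab_rank_def ncols_def)
qed

lemma PT_eq_poly_comp_gf: "\<forall>x\<in>set I. 0 < x \<Longrightarrow> PT I = poly (comp_gf I) 1"
  by (simp add: PT_eq_ptableau_sum flip: tableau_gf_colLens)
    (simp add: tableau_gf_def tableau_weight_def poly_sum q_var_def monom_power x_var_def poly_monom)

lemma merge_at_pos:
  assumes "\<forall>x\<in>set I. 0 < x" "k \<in> {1..<length I}"
  shows "\<forall>x\<in>set (merge_at I k). 0 < x"
  using assms nth_mem[of "k - 1" I] unfolding merge_at_def
  by (auto dest: in_set_takeD in_set_dropD)

theorem mainTheorem13:
  fixes I :: "nat list"
  assumes "is_composition I"
  shows "PT (1 # I) = PT I
     \<and> PT ((1 + hd I) # tl I)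
         = qint (length I) * PT I
           + (\<Sum>k\<in>{1..<length I}. monom 1 (k - 1) * PT (merge_at I k))"
proof
  show "PT (1 # I) = PT I"
    by (simp add: PT_eq_ptableau_sum colLens_Cons)
next
  obtain i J where I: "I = i # J" and pos: "\<forall>x\<in>set I. 0 < x"
    using assms by (cases I) (auto simp: is_composition_def)
  then have "comp_gf ((1 + hd I) # tl I) = add_col (comp_gf I)"
    by (cases i) (simp_all add: funpow_swap1)
  then have "PT ((1 + hd I) # tl I) = poly (add_col (comp_gf I)) 1"
    using pos I by (simp add: PT_eq_poly_comp_gf)
  also have "\<dots> = qint (length I) * PT I
      + (\<Sum>k\<in>{1..<length I}. monom 1 (k - 1) * PT (merge_at I k))"
    using pos merge_at_pos[OF pos]
    by (simp add: add_col_comp_gf poly_sum PT_eq_poly_comp_gf)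
  finally show "PT ((1 + hd I) # tl I) = qint (length I) * PT I
      + (\<Sum>k\<in>{1..<length I}. monom 1 (k - 1) * PT (merge_at I k))" .
qed

end
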